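(* Let $G$ be a graph and $k$ a positive integer. Suppose that every graph $H$ with $\mathcal{D}_k(H)=\mathcal{D}_k(G)$ has the same multiset (up to isomorphism) of components with more than $k$ vertices as $G$. Then $G$ is $k$-deck reconstructible, i.e. every graph $H$ with $\mathcal{D}_k(H)=\mathcal{D}_k(G)$ is isomorphic to $G$.
   Context: The $k$-deck $\mathcal{D}_k(G)$ is the multiset of isomorphism classes of the induced subgraphs of $G$ on $k$ vertices. *)

theory Defs
  imports Main "HOL-Library.Multiset"
begin

type_synonym 'a graph = "'a set \<times> 'a set set"

definition wf_graph :: "'a graph \<Rightarrow> bool" where
  "wf_graph G \<longleftrightarrow> finite (fst G) \<and> (\<forall>e\<in>snd G. e \<subseteq> fst G \<and> card e = 2)"

definition adj :: "'a graph \<Rightarrow> 'a \<Rightarrow> 'a \<Rightarrow> bool" where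
  "adj G u v \<longleftrightarrow> {u, v} \<in> snd G"

definition graph_iso :: "'a graph \<Rightarrow> 'b graph \<Rightarrow> bool" where
  "graph_iso G H \<longleftrightarrow> (\<exists>f. bij_betw f (fst G) (fst H) \<and>
     (\<forall>u\<in>fst G. \<forall>v\<in>fst G. adj G u v \<longleftrightarrow> adj H (f u) (f v)))"

definition induced :: "'a graph \<Rightarrow> 'a set \<Rightarrow> 'a graph" where
  "induced G S = (S, {e \<in> snd G. e \<subseteq> S})"

definition isoclass :: "'a graph \<Rightarrow> nat graph set" where
  "isoclass G = {H. wf_graph H \<and> graph_iso G H}"

definition deck :: "nat \<Rightarrow> 'a graph \<Rightarrow> nat graph set multiset" where
  "deck k G = image_mset (\<lambda>S. isoclass (induced G S))
                (mset_set {S. S \<subseteq> fst G \<and> card S = k})"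

definition components :: "'a graph \<Rightarrow> 'a set set" where
  "components G = (\<lambda>v. {w \<in> fst G. (adj G)\<^sup>*\<^sup>* v w}) ` fst G"

definition big_components :: "nat \<Rightarrow> 'a graph \<Rightarrow> nat graph set multiset" where
  "big_components k G = image_mset (\<lambda>C. isoclass (induced G C))
                (mset_set {C \<in> components G. card C > k})"

end

theory Submission
  imports Defs "HOL-Library.Disjoint_Sets" "HOL-Combinatorics.Permutations"
begin

text \<open>
  For a graph F on at most k vertices, double counting the pairs (T, S) with T an induced copy
  of F inside a k-subset S shows that the number of induced copies of F is determined by the
  k-deck (Kelly's lemma). If F is connected, every induced copy lies inside a single component, so
  the number of copies of F equals the number of components isomorphic to F plus the numbers of
  copies of F inside the components with more than |F| vertices. Hence, once the components with
  more than j + 1 vertices are known up to isomorphism, so are those with exactly j + 1 vertices.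
  Descending from the hypothesis for j = k to j = 0, H and G have the same multiset of components,
  and isomorphisms between matched components glue to an isomorphism of H and G.
\<close>

section \<open>Graphs and isomorphism\<close>

lemma adj_commute: "adj G u v \<longleftrightarrow> adj G v u"
  by (simp add: adj_def insert_commute)

lemma adj_in_vertices: "wf_graph G \<Longrightarrow> adj G u v \<Longrightarrow> u \<in> fst G \<and> v \<in> fst G"
  unfolding wf_graph_def adj_def by blast

lemma fst_induced [simp]: "fst (induced G S) = S"
  by (simp add: induced_def)

lemma adj_induced: "adj (induced G S) u v \<longleftrightarrow> adj G u v \<and> u \<in> S \<and> v \<in> S"
  by (auto simp: adj_def induced_def)

lemma induced_induced: "T \<subseteq> S \<Longrightarrow> induced (induced G S) T = induced G T"
  by (auto simp: induced_def)

lemma wf_graph_induced: "wf_graph G \<Longrightarrow> S \<subseteq> fst G \<Longrightarrow> wf_graph (induced G S)"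
  unfolding wf_graph_def induced_def by (auto intro: finite_subset)

lemma induced_vertices: "wf_graph G \<Longrightarrow> induced G (fst G) = G"
  unfolding wf_graph_def induced_def by (cases G) auto

lemma graph_iso_sym: "graph_iso G H \<Longrightarrow> graph_iso H G"
proof -
  assume "graph_iso G H"
  then obtain f where f: "bij_betw f (fst G) (fst H)"
    and adj_f: "\<forall>u\<in>fst G. \<forall>v\<in>fst G. adj G u v \<longleftrightarrow> adj H (f u) (f v)"
    unfolding graph_iso_def by blast
  let ?g = "inv_into (fst G) f"
  have "adj H u v \<longleftrightarrow> adj G (?g u) (?g v)" if "u \<in> fst H" "v \<in> fst H" for u v
  proof -
    have "?g u \<in> fst G" "?g v \<in> fst G"
      using that bij_betwE[OF bij_betw_inv_into[OF f]] by blast+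
    moreover have "f (?g u) = u" "f (?g v) = v"
      using that bij_betw_inv_into_right[OF f] by blast+
    ultimately show ?thesis
      using adj_f by metis
  qed
  with bij_betw_inv_into[OF f] show ?thesis
    unfolding graph_iso_def by blast
qed

lemma graph_iso_trans: "graph_iso G H \<Longrightarrow> graph_iso H K \<Longrightarrow> graph_iso G K"
proof -
  assume "graph_iso G H" "graph_iso H K"
  then obtain f g where f: "bij_betw f (fst G) (fst H)" and g: "bij_betw g (fst H) (fst K)"
    and adj_f: "\<forall>u\<in>fst G. \<forall>v\<in>fst G. adj G u v \<longleftrightarrow> adj H (f u) (f v)"
    and adj_g: "\<forall>u\<in>fst H. \<forall>v\<in>fst H. adj H u v \<longleftrightarrow> adj K (g u) (g v)"
    unfolding graph_iso_def by blast
  have "adj G u v \<longleftrightarrow> adj K (g (f u)) (g (f v))" if "u \<in> fst G" "v \<in> fst G" for u v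
    using adj_f adj_g bij_betwE[OF f] that by blast
  with bij_betw_trans[OF f g] show ?thesis
    unfolding graph_iso_def by auto
qed

lemma graph_iso_card: "graph_iso G H \<Longrightarrow> card (fst G) = card (fst H)"
  unfolding graph_iso_def using bij_betw_same_card by blast

lemma graph_iso_induced:
  assumes f: "bij_betw f (fst G) (fst H)"
    and adj_f: "\<forall>u\<in>fst G. \<forall>v\<in>fst G. adj G u v \<longleftrightarrow> adj H (f u) (f v)"
    and S: "S \<subseteq> fst G"
  shows "graph_iso (induced G S) (induced H (f ` S))"
proof -
  have "bij_betw f S (f ` S)"
    using S f by (meson bij_betw_imp_inj_on bij_betw_subset inj_on_imp_bij_betw)
  moreover have "adj (induced G S) u v \<longleftrightarrow> adj (induced H (f ` S)) (f u) (f v)"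
    if "u \<in> S" "v \<in> S" for u v
    using that S adj_f by (auto simp: adj_induced)
  ultimately show ?thesis
    unfolding graph_iso_def by auto
qed

definition map_graph :: "('a \<Rightarrow> 'b) \<Rightarrow> 'a graph \<Rightarrow> 'b graph" where
  "map_graph h G = (h ` fst G, image h ` snd G)"

lemma
  assumes G: "wf_graph G" and h: "inj_on h (fst G)"
  shows wf_graph_map_graph: "wf_graph (map_graph h G)"
    and graph_iso_map_graph: "graph_iso G (map_graph h G)"
proof -
  have edge: "e \<subseteq> fst G" "card e = 2" if "e \<in> snd G" for e
    using G that unfolding wf_graph_def by auto
  have "card (h ` e) = 2" if "e \<in> snd G" for e
    using edge[OF that] card_image[OF inj_on_subset[OF h]] by simp
  then show "wf_graph (map_graph h G)"
    using G edge unfolding wf_graph_def map_graph_def by auto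
  have "adj G u v \<longleftrightarrow> adj (map_graph h G) (h u) (h v)" if "u \<in> fst G" "v \<in> fst G" for u v
  proof -
    have "h ` {u, v} = h ` e \<longleftrightarrow> {u, v} = e" if "e \<in> snd G" for e
      using inj_on_image_eq_iff[OF h] edge(1)[OF that] \<open>u \<in> fst G\<close> \<open>v \<in> fst G\<close> by blast
    then show ?thesis
      unfolding adj_def map_graph_def by (auto simp: image_iff)
  qed
  moreover have "bij_betw h (fst G) (fst (map_graph h G))"
    using h by (simp add: map_graph_def inj_on_imp_bij_betw)
  ultimately show "graph_iso G (map_graph h G)"
    unfolding graph_iso_def by blast
qed

lemma ex_nat_graph_iso:
  assumes "wf_graph G"
  obtains H :: "nat graph" where "wf_graph H" "graph_iso G H"
proof -
  have "finite (fst G)"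
    using assms by (simp add: wf_graph_def)
  then obtain h :: "'a \<Rightarrow> nat" where "inj_on h (fst G)"
    using finite_imp_inj_to_nat_seg by blast
  with assms show ?thesis
    using that wf_graph_map_graph graph_iso_map_graph by blast
qed

lemma isoclass_eq_iff:
  assumes "wf_graph G" "wf_graph H"
  shows "isoclass G = isoclass H \<longleftrightarrow> graph_iso G H"
proof
  assume eq: "isoclass G = isoclass H"
  obtain Z :: "nat graph" where "wf_graph Z" "graph_iso G Z"
    using ex_nat_graph_iso[OF assms(1)] .
  with eq have "graph_iso H Z"
    unfolding isoclass_def by blast
  with \<open>graph_iso G Z\<close> show "graph_iso G H"
    using graph_iso_sym graph_iso_trans by blast
next
  assume "graph_iso G H"
  then have "graph_iso G Z \<longleftrightarrow> graph_iso H Z" for Z :: "nat graph"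
    using graph_iso_sym graph_iso_trans by metis
  then show "isoclass G = isoclass H"
    unfolding isoclass_def by simp
qed

definition class_rep :: "nat graph set \<Rightarrow> nat graph" where
  "class_rep c = (SOME Y. Y \<in> c)"

lemma class_rep_isoclass:
  assumes "wf_graph G"
  shows "wf_graph (class_rep (isoclass G))" "graph_iso G (class_rep (isoclass G))"
proof -
  obtain Z :: "nat graph" where "wf_graph Z" "graph_iso G Z"
    using ex_nat_graph_iso[OF assms] .
  then have "Z \<in> isoclass G"
    by (simp add: isoclass_def)
  then have "class_rep (isoclass G) \<in> isoclass G"
    unfolding class_rep_def by (rule someI)
  then show "wf_graph (class_rep (isoclass G))" "graph_iso G (class_rep (isoclass G))"
    by (simp_all add: isoclass_def)
qed

section \<open>Connected components\<close>

definition component_of :: "'a graph \<Rightarrow> 'a \<Rightarrow> 'a set" where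
  "component_of G v = {w \<in> fst G. (adj G)\<^sup>*\<^sup>* v w}"

definition connected_graph :: "'a graph \<Rightarrow> bool" where
  "connected_graph G \<longleftrightarrow> (\<forall>u\<in>fst G. \<forall>v\<in>fst G. (adj G)\<^sup>*\<^sup>* u v)"

lemma components_eq_image: "components G = component_of G ` fst G"
  by (simp add: components_def component_of_def)

lemma rtranclp_adj_in_vertices:
  "(adj G)\<^sup>*\<^sup>* u w \<Longrightarrow> wf_graph G \<Longrightarrow> u \<in> fst G \<Longrightarrow> w \<in> fst G"
  by (induction rule: rtranclp_induct) (auto dest: adj_in_vertices)

lemma symp_adj: "symp (adj G)"
  by (rule sympI) (simp add: adj_commute)

lemma rtranclp_adj_commute: "(adj G)\<^sup>*\<^sup>* u w \<Longrightarrow> (adj G)\<^sup>*\<^sup>* w u"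
  by (rule sympD[OF symp_rtranclp[OF symp_adj]])

lemma component_of_self: "v \<in> fst G \<Longrightarrow> v \<in> component_of G v"
  by (simp add: component_of_def)

lemma component_of_subset: "component_of G v \<subseteq> fst G"
  by (auto simp: component_of_def)

lemma component_of_eq:
  assumes "w \<in> component_of G v"
  shows "component_of G w = component_of G v"
proof -
  have vw: "(adj G)\<^sup>*\<^sup>* v w"
    using assms by (simp add: component_of_def)
  then have wv: "(adj G)\<^sup>*\<^sup>* w v"
    by (rule rtranclp_adj_commute)
  from vw wv have "(adj G)\<^sup>*\<^sup>* w x \<longleftrightarrow> (adj G)\<^sup>*\<^sup>* v x" for x
    using rtranclp_trans[of "adj G" v w x] rtranclp_trans[of "adj G" w v x] by blast
  then show ?thesis
    by (simp add: component_of_def)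
qed

lemma component_of_in_components: "v \<in> fst G \<Longrightarrow> component_of G v \<in> components G"
  by (simp add: components_eq_image)

lemma component_eq_component_of:
  assumes "C \<in> components G" "x \<in> C"
  shows "C = component_of G x"
proof -
  obtain v where "C = component_of G v"
    using assms(1) unfolding components_eq_image by blast
  with assms(2) show ?thesis
    using component_of_eq by metis
qed

lemma components_disjoint:
  assumes "C \<in> components G" "D \<in> components G" "C \<noteq> D"
  shows "C \<inter> D = {}"
  using component_eq_component_of[OF assms(1)] component_eq_component_of[OF assms(2)] assms(3)
  by blast

lemma components_subset: "C \<in> components G \<Longrightarrow> C \<subseteq> fst G"
  unfolding components_eq_image using component_of_subset by (metis imageE)

lemma finite_components: "wf_graph G \<Longrightarrow> finite (components G)"
  unfolding components_eq_image wf_graph_def by simp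

lemma finite_component:
  assumes "wf_graph G" "C \<in> components G"
  shows "finite C"
  using finite_subset[OF components_subset[OF assms(2)]] assms(1) by (simp add: wf_graph_def)

lemma card_component_pos:
  assumes "wf_graph G" "C \<in> components G"
  shows "0 < card C"
proof -
  obtain v where "v \<in> fst G" "C = component_of G v"
    using assms(2) by (auto simp: components_eq_image)
  then have "v \<in> C"
    by (simp add: component_of_self)
  with finite_component[OF assms] show ?thesis
    by (auto simp: card_gt_0_iff)
qed

lemma wf_graph_induced_component:
  assumes "wf_graph G" "C \<in> components G"
  shows "wf_graph (induced G C)"
  using wf_graph_induced[OF assms(1) components_subset[OF assms(2)]] .

lemma adj_component_of_eq:
  assumes "wf_graph G" "adj G u w"
  shows "component_of G w = component_of G u"
proof -
  have "w \<in> fst G"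
    using adj_in_vertices[OF assms] by simp
  with assms(2) have "w \<in> component_of G u"
    by (simp add: component_of_def)
  then show ?thesis
    by (rule component_of_eq)
qed

lemma rtranclp_adj_induced_component_of:
  assumes "wf_graph G" "v \<in> fst G" "(adj G)\<^sup>*\<^sup>* v w"
  shows "(adj (induced G (component_of G v)))\<^sup>*\<^sup>* v w"
  using assms(3)
proof (induction rule: rtranclp_induct)
  case base
  then show ?case by simp
next
  case (step y z)
  have "y \<in> fst G" "z \<in> fst G"
    using rtranclp_adj_in_vertices[OF step.hyps(1) assms(1,2)] adj_in_vertices[OF assms(1) step.hyps(2)]
    by auto
  moreover have "(adj G)\<^sup>*\<^sup>* v z"
    using step.hyps by (rule rtranclp.rtrancl_into_rtrancl)
  ultimately have "y \<in> component_of G v" "z \<in> component_of G v"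
    using step.hyps(1) by (simp_all add: component_of_def)
  with step.hyps(2) have "adj (induced G (component_of G v)) y z"
    by (simp add: adj_induced)
  with step.IH show ?case
    by simp
qed

lemma connected_induced_component:
  assumes "wf_graph G" "C \<in> components G"
  shows "connected_graph (induced G C)"
  unfolding connected_graph_def fst_induced
proof (intro ballI)
  fix x y assume "x \<in> C" "y \<in> C"
  have C: "C = component_of G x"
    using assms(2) \<open>x \<in> C\<close> by (rule component_eq_component_of)
  have "x \<in> fst G"
    using components_subset[OF assms(2)] \<open>x \<in> C\<close> by blast
  moreover have "(adj G)\<^sup>*\<^sup>* x y"
    using \<open>y \<in> C\<close> by (simp add: C component_of_def)
  ultimately show "(adj (induced G C))\<^sup>*\<^sup>* x y"
    unfolding C by (rule rtranclp_adj_induced_component_of[OF assms(1)])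
qed

lemma connected_graph_iso:
  assumes "wf_graph G" "graph_iso G H" "connected_graph G"
  shows "connected_graph H"
proof -
  obtain f where f: "bij_betw f (fst G) (fst H)"
    and adj_f: "\<forall>u\<in>fst G. \<forall>v\<in>fst G. adj G u v \<longleftrightarrow> adj H (f u) (f v)"
    using assms(2) unfolding graph_iso_def by blast
  have walk: "(adj H)\<^sup>*\<^sup>* (f u) (f v)" if "u \<in> fst G" "(adj G)\<^sup>*\<^sup>* u v" for u v
    using that(2)
  proof (induction rule: rtranclp_induct)
    case (step y z)
    have "y \<in> fst G" "z \<in> fst G"
      using rtranclp_adj_in_vertices[OF step.hyps(1) assms(1) that(1)]
        adj_in_vertices[OF assms(1) step.hyps(2)] by auto
    with adj_f step.hyps(2) have "adj H (f y) (f z)"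
      by simp
    with step.IH show ?case
      by simp
  qed simp
  show ?thesis
    unfolding connected_graph_def
  proof (intro ballI)
    fix x y assume "x \<in> fst H" "y \<in> fst H"
    then obtain u v where "u \<in> fst G" "v \<in> fst G" "x = f u" "y = f v"
      using bij_betw_imp_surj_on[OF f] by blast
    with assms(3) walk show "(adj H)\<^sup>*\<^sup>* x y"
      unfolding connected_graph_def by simp
  qed
qed

lemma connected_induced_subset_component_of:
  assumes "connected_graph (induced G S)" "S \<subseteq> fst G" "v \<in> S"
  shows "S \<subseteq> component_of G v"
proof
  fix w assume "w \<in> S"
  have "adj (induced G S) \<le> adj G"
    by (auto simp: adj_induced)
  then have "(adj (induced G S))\<^sup>*\<^sup>* \<le> (adj G)\<^sup>*\<^sup>*"
    by (rule rtranclp_mono)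
  moreover have "(adj (induced G S))\<^sup>*\<^sup>* v w"
    using assms(1,3) \<open>w \<in> S\<close> by (simp add: connected_graph_def)
  ultimately have "(adj G)\<^sup>*\<^sup>* v w"
    by (simp add: le_fun_def)
  with assms(2) \<open>w \<in> S\<close> show "w \<in> component_of G v"
    by (auto simp: component_of_def)
qed

lemma adj_in_component:
  assumes "wf_graph G" "C \<in> components G" "x \<in> C" "adj G x y"
  shows "y \<in> C"
proof -
  have "C = component_of G x"
    using assms(2,3) by (rule component_eq_component_of)
  also have "\<dots> = component_of G y"
    using adj_component_of_eq[OF assms(1,4)] by simp
  finally show ?thesis
    using adj_in_vertices[OF assms(1,4)] by (simp add: component_of_self)
qed

lemma Union_components: "\<Union> (components G) = fst G"
proof (intro equalityI subsetI)
  fix v assume "v \<in> \<Union> (components G)"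
  then show "v \<in> fst G"
    using components_subset by blast
next
  fix v assume "v \<in> fst G"
  then have "v \<in> component_of G v" "component_of G v \<in> components G"
    by (simp_all add: component_of_self component_of_in_components)
  then show "v \<in> \<Union> (components G)"
    by blast
qed

section \<open>Counting induced copies\<close>

definition copies :: "'b graph \<Rightarrow> 'a graph \<Rightarrow> nat" where
  "copies F X = card {S. S \<subseteq> fst X \<and> graph_iso (induced X S) F}"

lemma copies_le_if_graph_iso:
  assumes "wf_graph Y" "graph_iso X Y"
  shows "copies F X \<le> copies F Y"
proof -
  obtain f where f: "bij_betw f (fst X) (fst Y)"
    and adj_f: "\<forall>u\<in>fst X. \<forall>v\<in>fst X. adj X u v \<longleftrightarrow> adj Y (f u) (f v)"
    using assms(2) unfolding graph_iso_def by blast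
  let ?CX = "{S. S \<subseteq> fst X \<and> graph_iso (induced X S) F}"
  let ?CY = "{S. S \<subseteq> fst Y \<and> graph_iso (induced Y S) F}"
  have "inj_on (image f) ?CX"
    using inj_on_image_Pow[OF bij_betw_imp_inj_on[OF f]] by (rule inj_on_subset) auto
  moreover have "image f ` ?CX \<subseteq> ?CY"
  proof clarify
    fix S assume "S \<subseteq> fst X" "graph_iso (induced X S) F"
    moreover have "graph_iso (induced X S) (induced Y (f ` S))"
      using f adj_f \<open>S \<subseteq> fst X\<close> by (rule graph_iso_induced)
    ultimately show "f ` S \<subseteq> fst Y \<and> graph_iso (induced Y (f ` S)) F"
      using bij_betw_imp_surj_on[OF f] graph_iso_sym graph_iso_trans by blast
  qed
  moreover have "finite ?CY"
    using assms(1) by (simp add: wf_graph_def)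
  ultimately show ?thesis
    unfolding copies_def by (rule card_inj_on_le)
qed

lemma copies_graph_iso:
  assumes "wf_graph X" "wf_graph Y" "graph_iso X Y"
  shows "copies F X = copies F Y"
  by (intro antisym copies_le_if_graph_iso[OF assms(2,3)]
      copies_le_if_graph_iso[OF assms(1) graph_iso_sym[OF assms(3)]])

lemma card_supersets_of_card:
  assumes "finite V" "T \<subseteq> V" "card T \<le> k"
  shows "card {S. S \<subseteq> V \<and> card S = k \<and> T \<subseteq> S} = (card V - card T) choose (k - card T)"
proof -
  let ?U = "{U. U \<subseteq> V - T \<and> card U = k - card T}"
  have fin_T: "finite T"
    using assms(1,2) by (rule finite_subset[rotated])
  have "{S. S \<subseteq> V \<and> card S = k \<and> T \<subseteq> S} = (\<lambda>U. U \<union> T) ` ?U"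
  proof (intro equalityI subsetI)
    fix S assume S: "S \<in> {S. S \<subseteq> V \<and> card S = k \<and> T \<subseteq> S}"
    then have "card (S - T) = k - card T"
      using fin_T by (simp add: card_Diff_subset)
    with S show "S \<in> (\<lambda>U. U \<union> T) ` ?U"
      by (intro image_eqI[of _ _ "S - T"]) auto
  next
    fix S assume "S \<in> (\<lambda>U. U \<union> T) ` ?U"
    then obtain U where U: "U \<subseteq> V - T" "card U = k - card T" "S = U \<union> T"
      by blast
    moreover have "finite U" "U \<inter> T = {}"
      using U(1) finite_subset[OF _ assms(1)] by auto
    ultimately have "card S = card U + card T"
      using fin_T by (simp add: card_Un_disjoint)
    with U assms show "S \<in> {S. S \<subseteq> V \<and> card S = k \<and> T \<subseteq> S}"
      by auto
  qed
  moreover have "inj_on (\<lambda>U. U \<union> T) ?U"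
    by (rule inj_onI) blast
  ultimately have "card {S. S \<subseteq> V \<and> card S = k \<and> T \<subseteq> S} = card ?U"
    by (simp add: card_image)
  also have "\<dots> = (card V - card T) choose (k - card T)"
    using assms by (simp add: n_subsets card_Diff_subset fin_T)
  finally show ?thesis .
qed

lemma sum_copies_k_subsets:
  assumes X: "wf_graph X" and F: "card (fst F) \<le> k"
  shows "(\<Sum>S | S \<subseteq> fst X \<and> card S = k. copies F (induced X S))
         = copies F X * ((card (fst X) - card (fst F)) choose (k - card (fst F)))"
proof -
  let ?K = "{S. S \<subseteq> fst X \<and> card S = k}"
  let ?C = "{T. T \<subseteq> fst X \<and> graph_iso (induced X T) F}"
  have fin: "finite (fst X)"
    using X by (simp add: wf_graph_def)
  have "{T. T \<subseteq> fst (induced X S) \<and> graph_iso (induced (induced X S) T) F} = {T \<in> ?C. T \<subseteq> S}"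
    if "S \<in> ?K" for S
    using that by (auto simp: induced_induced)
  then have "copies F (induced X S) = card {T \<in> ?C. T \<subseteq> S}" if "S \<in> ?K" for S
    using that by (simp add: copies_def)
  then have "(\<Sum>S\<in>?K. copies F (induced X S)) = (\<Sum>S\<in>?K. card {T \<in> ?C. T \<subseteq> S})"
    by (rule sum.cong[OF refl])
  also have "\<dots> = (\<Sum>T\<in>?C. card {S \<in> ?K. T \<subseteq> S})"
    using sum.swap_restrict[of ?K ?C "\<lambda>_ _. 1::nat" "\<lambda>S T. T \<subseteq> S"] fin by simp
  also have "\<dots> = (\<Sum>T\<in>?C. (card (fst X) - card (fst F)) choose (k - card (fst F)))"
  proof (rule sum.cong[OF refl])
    fix T assume "T \<in> ?C"
    then have "T \<subseteq> fst X" "card T = card (fst F)"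
      using graph_iso_card[of "induced X T" F] by auto
    then show "card {S \<in> ?K. T \<subseteq> S} = (card (fst X) - card (fst F)) choose (k - card (fst F))"
      using card_supersets_of_card[OF fin, of T k] F by (simp add: conj_assoc)
  qed
  also have "\<dots> = copies F X * ((card (fst X) - card (fst F)) choose (k - card (fst F)))"
    by (simp add: copies_def)
  finally show ?thesis .
qed

lemma copies_class_rep_isoclass:
  assumes "wf_graph Y"
  shows "copies F (class_rep (isoclass Y)) = copies F Y"
  using class_rep_isoclass[OF assms] copies_graph_iso[OF assms] graph_iso_sym by metis

lemma sum_mset_copies_isoclasses:
  assumes "\<And>S. S \<in> A \<Longrightarrow> wf_graph (induced X S)"
  shows "(\<Sum>c\<in>#image_mset (\<lambda>S. isoclass (induced X S)) (mset_set A). copies F (class_rep c))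
         = (\<Sum>S\<in>A. copies F (induced X S))"
proof -
  have "(\<Sum>c\<in>#image_mset (\<lambda>S. isoclass (induced X S)) (mset_set A). copies F (class_rep c))
        = (\<Sum>S\<in>A. copies F (class_rep (isoclass (induced X S))))"
    by (simp add: sum_unfold_sum_mset image_mset.compositionality comp_def)
  also have "\<dots> = (\<Sum>S\<in>A. copies F (induced X S))"
    using assms by (intro sum.cong refl copies_class_rep_isoclass)
  finally show ?thesis .
qed

lemma sum_copies_deck:
  assumes "wf_graph X"
  shows "(\<Sum>S | S \<subseteq> fst X \<and> card S = k. copies F (induced X S))
         = (\<Sum>c\<in>#deck k X. copies F (class_rep c))"
  unfolding deck_def
  by (rule sum_mset_copies_isoclasses[symmetric]) (simp add: wf_graph_induced[OF assms])

lemma size_deck: "wf_graph X \<Longrightarrow> size (deck k X) = card (fst X) choose k"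
  unfolding deck_def wf_graph_def by (simp add: n_subsets)

lemma binomial_right_strict_mono:
  assumes "0 < k" "k \<le> n" "m < n"
  shows "m choose k < n choose k"
proof -
  obtain n' k' where n: "n = Suc n'" and k: "k = Suc k'"
    using assms by (metis gr0_implies_Suc less_imp_Suc_add)
  have "m choose k \<le> n' choose k"
    using assms(3) n by (intro binomial_right_mono) simp
  also have "\<dots> < n choose k"
    using assms(2) by (simp add: n k)
  finally show ?thesis .
qed

lemma binomial_right_inj:
  assumes "0 < k" "k \<le> n" "m choose k = n choose k"
  shows "m = n"
proof -
  have "k \<le> m"
    using assms zero_less_binomial_iff by metis
  then show ?thesis
    using assms binomial_right_strict_mono[of k n m] binomial_right_strict_mono[of k m n]
    by (metis less_irrefl linorder_neqE_nat)
qed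

lemma card_eq_if_deck_eq:
  assumes "wf_graph G" "wf_graph H" "0 < k" "k \<le> card (fst G)" "deck k H = deck k G"
  shows "card (fst H) = card (fst G)"
proof -
  have "card (fst H) choose k = card (fst G) choose k"
    using size_deck[OF assms(1)] size_deck[OF assms(2)] assms(5) by metis
  then show ?thesis
    by (rule binomial_right_inj[OF assms(3,4)])
qed

lemma copies_eq_if_deck_eq:
  assumes G: "wf_graph G" and H: "wf_graph H" and k: "0 < k" "k \<le> card (fst G)"
    and deck: "deck k H = deck k G" and F: "card (fst F) \<le> k"
  shows "copies F H = copies F G"
proof -
  let ?c = "(card (fst G) - card (fst F)) choose (k - card (fst F))"
  have "copies F H * ?c = (\<Sum>S | S \<subseteq> fst H \<and> card S = k. copies F (induced H S))"
    using sum_copies_k_subsets[OF H F] card_eq_if_deck_eq[OF G H k deck] by simp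
  also have "\<dots> = (\<Sum>c\<in>#deck k H. copies F (class_rep c))"
    by (rule sum_copies_deck[OF H])
  also have "\<dots> = (\<Sum>S | S \<subseteq> fst G \<and> card S = k. copies F (induced G S))"
    unfolding deck by (rule sum_copies_deck[OF G, symmetric])
  also have "\<dots> = copies F G * ?c"
    by (rule sum_copies_k_subsets[OF G F])
  finally have "copies F H * ?c = copies F G * ?c" .
  moreover have "0 < ?c"
    using k F by simp
  ultimately show ?thesis
    by simp
qed

section \<open>The deck determines the components\<close>

lemma connected_copy_subset_component_of:
  assumes F: "wf_graph F" "connected_graph F"
    and S: "S \<subseteq> fst X" "graph_iso (induced X S) F" "v \<in> S"
  shows "S \<subseteq> component_of X v"
proof -
  have "connected_graph (induced X S)"
    using connected_graph_iso[OF F(1) graph_iso_sym[OF S(2)] F(2)] .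
  then show ?thesis
    using S(1,3) by (rule connected_induced_subset_component_of)
qed

lemma copies_eq_sum_components:
  assumes X: "wf_graph X" and F: "wf_graph F" "connected_graph F" "fst F \<noteq> {}"
  shows "copies F X = (\<Sum>C\<in>components X. copies F (induced X C))"
proof -
  let ?B = "\<lambda>C. {S. S \<subseteq> C \<and> graph_iso (induced X S) F}"
  have nonempty: "S \<noteq> {}" if "graph_iso (induced X S) F" for S
    using graph_iso_card[OF that] F(1,3) by (auto simp: wf_graph_def)
  have union: "{S. S \<subseteq> fst X \<and> graph_iso (induced X S) F} = (\<Union>C\<in>components X. ?B C)"
  proof (intro equalityI subsetI)
    fix S assume S: "S \<in> {S. S \<subseteq> fst X \<and> graph_iso (induced X S) F}"
    then obtain v where "v \<in> S"
      using nonempty by blast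
    with S have "S \<subseteq> component_of X v"
      by (intro connected_copy_subset_component_of[OF F(1,2)]) auto
    moreover have "component_of X v \<in> components X"
      using S \<open>v \<in> S\<close> by (intro component_of_in_components) auto
    ultimately show "S \<in> (\<Union>C\<in>components X. ?B C)"
      using S by blast
  next
    fix S assume "S \<in> (\<Union>C\<in>components X. ?B C)"
    then show "S \<in> {S. S \<subseteq> fst X \<and> graph_iso (induced X S) F}"
      using components_subset by blast
  qed
  have disjoint: "?B C \<inter> ?B D = {}" if "C \<in> components X" "D \<in> components X" "C \<noteq> D" for C D
  proof -
    have "C \<inter> D = {}"
      using that by (rule components_disjoint)
    then show ?thesis
      using nonempty by blast
  qed
  have finite: "finite (?B C)" if "C \<in> components X" for C
    using finite_component[OF X that] by simp
  have copies_component: "card (?B C) = copies F (induced X C)" if "C \<in> components X" for C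
  proof -
    have "?B C = {S. S \<subseteq> fst (induced X C) \<and> graph_iso (induced (induced X C) S) F}"
      by (auto simp: induced_induced)
    then show ?thesis
      by (simp add: copies_def)
  qed
  have "copies F X = card (\<Union>C\<in>components X. ?B C)"
    by (simp add: copies_def union)
  also have "\<dots> = (\<Sum>C\<in>components X. card (?B C))"
    using finite disjoint by (intro card_UN_disjoint finite_components[OF X]) auto
  also have "\<dots> = (\<Sum>C\<in>components X. copies F (induced X C))"
    using copies_component by simp
  finally show ?thesis .
qed

lemma copies_if_card_le:
  assumes Y: "wf_graph Y" and card: "card (fst Y) \<le> card (fst F)"
  shows "copies F Y = (if graph_iso Y F then 1 else 0)"
proof -
  have all_vertices: "S = fst Y" if "S \<subseteq> fst Y" "graph_iso (induced Y S) F" for S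
    using graph_iso_card[OF that(2)] card card_subset_eq[OF _ that(1)] card_mono[OF _ that(1)] Y
    by (simp add: wf_graph_def)
  then have "{S. S \<subseteq> fst Y \<and> graph_iso (induced Y S) F} = (if graph_iso Y F then {fst Y} else {})"
    using induced_vertices[OF Y] by (cases "graph_iso Y F") (auto dest: all_vertices)
  then show ?thesis
    by (simp add: copies_def)
qed

lemma copies_connected_eq:
  assumes X: "wf_graph X" and F: "wf_graph F" "connected_graph F" "card (fst F) = Suc j"
  shows "copies F X = card {C \<in> components X. graph_iso (induced X C) F}
           + (\<Sum>C\<in>{C \<in> components X. card C > Suc j}. copies F (induced X C))"
proof -
  let ?small = "{C \<in> components X. \<not> card C > Suc j}"
  have fin: "finite (components X)"
    using finite_components[OF X] .
  have "copies F X = (\<Sum>C\<in>components X. copies F (induced X C))"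
    using F by (intro copies_eq_sum_components X) auto
  also have "\<dots> = (\<Sum>C\<in>?small. copies F (induced X C))
                   + (\<Sum>C\<in>{C \<in> components X. card C > Suc j}. copies F (induced X C))"
    using fin by (subst sum.union_disjoint[symmetric]) (auto intro: sum.cong)
  also have "(\<Sum>C\<in>?small. copies F (induced X C)) = (\<Sum>C\<in>?small. if graph_iso (induced X C) F then 1 else 0)"
    using F(3) wf_graph_induced_component[OF X] by (intro sum.cong refl copies_if_card_le) auto
  also have "\<dots> = card {C \<in> ?small. graph_iso (induced X C) F}"
    using fin by (simp flip: sum.inter_filter)
  also have "{C \<in> ?small. graph_iso (induced X C) F} = {C \<in> components X. graph_iso (induced X C) F}"
    using F(3) graph_iso_card by fastforce
  finally show ?thesis .
qed

lemma big_components_Suc: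
  assumes "wf_graph X"
  shows "big_components j X = big_components (Suc j) X
           + image_mset (\<lambda>C. isoclass (induced X C)) (mset_set {C \<in> components X. card C = Suc j})"
proof -
  have "{C \<in> components X. card C > j}
        = {C \<in> components X. card C > Suc j} \<union> {C \<in> components X. card C = Suc j}"
    by auto
  moreover have "mset_set ({C \<in> components X. card C > Suc j} \<union> {C \<in> components X. card C = Suc j})
        = mset_set {C \<in> components X. card C > Suc j} + mset_set {C \<in> components X. card C = Suc j}"
    using finite_components[OF assms] by (intro mset_set_Union) auto
  ultimately show ?thesis
    by (simp add: big_components_def)
qed

lemma sum_copies_big_components:
  assumes "wf_graph X"
  shows "(\<Sum>C\<in>{C \<in> components X. card C > j}. copies F (induced X C))
         = (\<Sum>c\<in>#big_components j X. copies F (class_rep c))"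
  unfolding big_components_def
  by (rule sum_mset_copies_isoclasses[symmetric]) (simp add: wf_graph_induced_component[OF assms])

lemma count_components_of_card:
  assumes "wf_graph X"
  shows "count (image_mset (\<lambda>C. isoclass (induced X C)) (mset_set {C \<in> components X. card C = n})) c
         = card {C \<in> components X. card C = n \<and> isoclass (induced X C) = c}"
  using finite_components[OF assms] by (simp add: count_image_mset_eq_card_vimage conj_assoc)

lemma components_of_isoclass:
  assumes X: "wf_graph X" and F: "wf_graph F" "card (fst F) = n"
  shows "{C \<in> components X. card C = n \<and> isoclass (induced X C) = isoclass F}
         = {C \<in> components X. graph_iso (induced X C) F}"
  using isoclass_eq_iff[OF wf_graph_induced_component[OF X] F(1)] graph_iso_card F(2)
  by fastforce

lemma components_of_isoclass_empty:
  assumes X: "wf_graph X"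
    and c: "\<nexists>F :: nat graph. wf_graph F \<and> connected_graph F \<and> card (fst F) = n \<and> c = isoclass F"
  shows "{C \<in> components X. card C = n \<and> isoclass (induced X C) = c} = {}"
proof (rule equals0I)
  fix C assume "C \<in> {C \<in> components X. card C = n \<and> isoclass (induced X C) = c}"
  then have C: "C \<in> components X" "card C = n" "isoclass (induced X C) = c"
    by auto
  let ?F = "class_rep (isoclass (induced X C))"
  have wf: "wf_graph (induced X C)"
    using X C(1) by (rule wf_graph_induced_component)
  have "wf_graph ?F" and iso: "graph_iso (induced X C) ?F"
    using class_rep_isoclass[OF wf] by auto
  moreover have "connected_graph ?F"
    using connected_graph_iso[OF wf iso connected_induced_component[OF X C(1)]] .
  moreover have "card (fst ?F) = n"
    using graph_iso_card[OF iso] C(2) by simp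
  moreover have "c = isoclass ?F"
    using isoclass_eq_iff[OF wf \<open>wf_graph ?F\<close>] iso C(3) by simp
  ultimately show False
    using c by blast
qed

lemma big_components_eq_if_Suc_eq:
  assumes G: "wf_graph G" and H: "wf_graph H" and k: "0 < k" "k \<le> card (fst G)"
    and deck: "deck k H = deck k G" and j: "Suc j \<le> k"
    and big: "big_components (Suc j) H = big_components (Suc j) G"
  shows "big_components j H = big_components j G"
proof -
  let ?size = "\<lambda>X :: _ graph. {C \<in> components X. card C = Suc j}"
  have "count (image_mset (\<lambda>C. isoclass (induced H C)) (mset_set (?size H))) c
        = count (image_mset (\<lambda>C. isoclass (induced G C)) (mset_set (?size G))) c" for c
  proof (cases "\<exists>F :: nat graph. wf_graph F \<and> connected_graph F \<and> card (fst F) = Suc j \<and> c = isoclass F")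
    case True
    then obtain F :: "nat graph"
      where F: "wf_graph F" "connected_graph F" "card (fst F) = Suc j" and c: "c = isoclass F"
      by blast
    have "copies F H = copies F G"
      by (rule copies_eq_if_deck_eq[OF G H k deck]) (simp add: F(3) j)
    moreover have "(\<Sum>C\<in>{C \<in> components H. card C > Suc j}. copies F (induced H C))
                 = (\<Sum>C\<in>{C \<in> components G. card C > Suc j}. copies F (induced G C))"
      by (simp add: sum_copies_big_components G H big)
    ultimately have "card {C \<in> components H. graph_iso (induced H C) F}
                   = card {C \<in> components G. graph_iso (induced G C) F}"
      using copies_connected_eq[OF H F] copies_connected_eq[OF G F] by simp
    then show ?thesis
      unfolding count_components_of_card[OF H] count_components_of_card[OF G] c
        components_of_isoclass[OF H F(1,3)] components_of_isoclass[OF G F(1,3)] .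
  next
    case False
    show ?thesis
      unfolding count_components_of_card[OF H] count_components_of_card[OF G]
        components_of_isoclass_empty[OF H False] components_of_isoclass_empty[OF G False]
      by simp
  qed
  then show ?thesis
    using big big_components_Suc[OF G, of j] big_components_Suc[OF H, of j]
    by (simp add: multiset_eqI)
qed

lemma big_components_0:
  assumes "wf_graph X"
  shows "big_components 0 X = image_mset (\<lambda>C. isoclass (induced X C)) (mset_set (components X))"
proof -
  have "{C \<in> components X. card C > 0} = components X"
    using card_component_pos[OF assms] by blast
  then show ?thesis
    by (simp add: big_components_def)
qed

section \<open>Gluing isomorphisms of components\<close>

lemma bij_betw_if_image_mset_eq:
  assumes "finite A" "finite B" "image_mset f (mset_set A) = image_mset g (mset_set B)"
  shows "\<exists>h. bij_betw h A B \<and> (\<forall>x\<in>A. f x = g (h x))"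
  using assms
proof (induction A arbitrary: B rule: finite_induct)
  case empty
  then have "B = {}"
    by (simp add: mset_set_empty_iff)
  then show ?case
    by (simp add: bij_betw_def)
next
  case (insert a A)
  have "f a \<in># image_mset f (mset_set (insert a A))"
    using insert.hyps(1) by simp
  then have "f a \<in># image_mset g (mset_set B)"
    by (simp only: insert.prems(2))
  then obtain b where b: "b \<in> B" "g b = f a"
    using insert.prems(1) by auto
  have "add_mset (f a) (image_mset f (mset_set A)) = image_mset f (mset_set (insert a A))"
    using insert.hyps by simp
  also have "\<dots> = image_mset g (mset_set B)"
    by (rule insert.prems(2))
  also have "\<dots> = add_mset (f a) (image_mset g (mset_set (B - {b})))"
    using b by (simp add: mset_set.remove[OF insert.prems(1) b(1)])
  finally have "image_mset f (mset_set A) = image_mset g (mset_set (B - {b}))"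
    by simp
  then obtain h where h: "bij_betw h A (B - {b})" "\<forall>x\<in>A. f x = g (h x)"
    using insert.IH insert.prems(1) by blast
  have "bij_betw (h(a := b)) A (B - {b}) = bij_betw h A (B - {b})"
    using insert.hyps(2) by (intro bij_betw_cong) auto
  with h(1) have "bij_betw (h(a := b)) (A \<union> {a}) ((B - {b}) \<union> {b})"
    using notIn_Un_bij_betw[of a A "h(a := b)" "B - {b}"] insert.hyps(2) by simp
  moreover have "A \<union> {a} = insert a A" "(B - {b}) \<union> {b} = B"
    using b(1) by auto
  moreover have "\<forall>x\<in>insert a A. f x = g ((h(a := b)) x)"
    using h(2) b insert.hyps(2) by auto
  ultimately show ?case
    by auto
qed

lemma bij_betw_glue_components:
  assumes \<psi>: "bij_betw \<psi> (components H) (components G)"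
    and \<phi>: "\<And>C. C \<in> components H \<Longrightarrow> bij_betw (\<phi> C) C (\<psi> C)"
  shows "bij_betw (\<lambda>v. \<phi> (component_of H v) v) (fst H) (fst G)"
proof -
  let ?f = "\<lambda>v. \<phi> (component_of H v) v"
  have "disjoint_family_on \<psi> (components H)"
    using components_disjoint bij_betwE[OF \<psi>] inj_onD[OF bij_betw_imp_inj_on[OF \<psi>]]
    unfolding disjoint_family_on_def by metis
  moreover have "bij_betw ?f C (\<psi> C)" if "C \<in> components H" for C
    using \<phi>[OF that] component_eq_component_of[OF that] bij_betw_cong[of C ?f "\<phi> C"] by metis
  ultimately have "bij_betw ?f (\<Union>C\<in>components H. C) (\<Union>C\<in>components H. \<psi> C)"
    by (rule bij_betw_UNION_disjoint)
  moreover have "(\<Union>C\<in>components H. \<psi> C) = \<Union> (components G)"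
    using bij_betw_imp_surj_on[OF \<psi>] by simp
  ultimately show ?thesis
    by (simp add: Union_components)
qed

lemma graph_iso_if_components_iso:
  assumes G: "wf_graph G" and H: "wf_graph H"
    and \<psi>: "bij_betw \<psi> (components H) (components G)"
    and iso: "\<forall>C\<in>components H. graph_iso (induced H C) (induced G (\<psi> C))"
  shows "graph_iso H G"
proof -
  obtain \<phi> where \<phi>: "\<forall>C\<in>components H. bij_betw (\<phi> C) C (\<psi> C) \<and>
      (\<forall>u\<in>C. \<forall>v\<in>C. adj (induced H C) u v \<longleftrightarrow> adj (induced G (\<psi> C)) (\<phi> C u) (\<phi> C v))"
    using bchoice[OF iso[unfolded graph_iso_def fst_induced]] by blast
  define f where "f v = \<phi> (component_of H v) v" for v
  have bij: "bij_betw f (fst H) (fst G)"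
    unfolding f_def using \<psi> \<phi> by (intro bij_betw_glue_components) auto
  have "adj H u v \<longleftrightarrow> adj G (f u) (f v)" if "u \<in> fst H" "v \<in> fst H" for u v
  proof -
    let ?C = "component_of H u" and ?D = "component_of H v"
    have C: "?C \<in> components H" "u \<in> ?C" and D: "?D \<in> components H" "v \<in> ?D"
      using that by (simp_all add: component_of_in_components component_of_self)
    have f_in: "f u \<in> \<psi> ?C" "f v \<in> \<psi> ?D" "\<psi> ?C \<in> components G"
      using \<phi> C D bij_betwE[OF \<psi>] unfolding f_def by (auto dest: bij_betwE)
    show ?thesis
    proof (cases "?C = ?D")
      case True
      then show ?thesis
        using \<phi> C D f_in unfolding f_def by (simp add: adj_induced)
    next
      case False
      then have "v \<notin> ?C" "f v \<notin> \<psi> ?C"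
        using component_eq_component_of[OF C(1)] f_in
          components_disjoint[OF bij_betwE[OF \<psi>, rule_format, OF C(1)] bij_betwE[OF \<psi>, rule_format, OF D(1)]]
          inj_onD[OF bij_betw_imp_inj_on[OF \<psi>] _ C(1) D(1)] by auto
      then show ?thesis
        using adj_in_component[OF H C] adj_in_component[OF G f_in(3,1)] by blast
    qed
  qed
  with bij show ?thesis
    unfolding graph_iso_def by blast
qed

lemma graph_iso_if_component_isoclasses_eq:
  assumes G: "wf_graph G" and H: "wf_graph H"
    and eq: "image_mset (\<lambda>C. isoclass (induced H C)) (mset_set (components H))
           = image_mset (\<lambda>C. isoclass (induced G C)) (mset_set (components G))"
  shows "graph_iso H G"
proof -
  obtain \<psi> where \<psi>: "bij_betw \<psi> (components H) (components G)"
    and classes: "\<forall>C\<in>components H. isoclass (induced H C) = isoclass (induced G (\<psi> C))"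
    using bij_betw_if_image_mset_eq[OF finite_components[OF H] finite_components[OF G] eq] by blast
  have "graph_iso (induced H C) (induced G (\<psi> C))" if "C \<in> components H" for C
    using classes that isoclass_eq_iff wf_graph_induced_component[OF H that]
      wf_graph_induced_component[OF G bij_betwE[OF \<psi>, rule_format, OF that]] by blast
  then show ?thesis
    using graph_iso_if_components_iso[OF G H \<psi>] by blast
qed

theorem lemma4p1:
  fixes G :: "'a graph" and k :: nat
  assumes "wf_graph G"
    and "0 < k"
    and "k \<le> card (fst G)"
    and "\<forall>H :: nat graph. wf_graph H \<and> deck k H = deck k G \<longrightarrow>
            big_components k H = big_components k G"
  shows "\<forall>H :: nat graph. wf_graph H \<and> deck k H = deck k G \<longrightarrow> graph_iso H G"
proof (intro allI impI)
  fix H :: "nat graph"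
  assume "wf_graph H \<and> deck k H = deck k G"
  then have H: "wf_graph H" and deck: "deck k H = deck k G"
    by auto
  have "big_components j H = big_components j G" if "j \<le> k" for j
    using that
  proof (induction j rule: inc_induct)
    case base
    show ?case
      using assms(4) H deck by blast
  next
    case (step j)
    then show ?case
      using big_components_eq_if_Suc_eq[OF assms(1) H assms(2,3) deck] by simp
  qed
  from this[of 0] show "graph_iso H G"
    using graph_iso_if_component_isoclasses_eq[OF assms(1) H] big_components_0[OF H]
      big_components_0[OF assms(1)] by simp
qed

end
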